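(* Consider the full information setting of online multiclass classification (every prediction reveals the true label $y_t$, i.e. the feedback graph is complete, so $\mathcal{Q}=[K]$, $\gamma_t=0$ and $v_t=1$ for all $t$). Suppose that for every round $t$, $\ell_t=\ell(\cdot,\mathbf{x}_t,y_t)$ is a regular surrogate loss with respect to $\ell$ with constant $L$, and that the OCO algorithm $\mathcal{A}$ satisfies, for some $h:\mathcal{W}\to\mathbb{R}_+$ and every $\mathbf{U}\in\mathcal{W}$, $\sum_{t=1}^T(\widehat\ell_t(\mathbf{W}_t)-\widehat\ell_t(\mathbf{U}))\le h(\mathbf{U})\sqrt{\sum_{t=1}^T\|\widehat{\mathbf{g}}_t\|^2}$ with $\widehat{\mathbf{g}}_t=v_t\nabla\ell_t(\mathbf{W}_t)$. Run Gappletron with $\mathcal{A}$ and a gap map $a:\mathbb{R}^{K\times d}\times\mathbb{R}^d\to[0,1]$ satisfying $a(\mathbf{W}_t,\mathbf{x}_t)=\ell(\mathbf{W}_t,\mathbf{x}_t,y_t^\star)$. Then for every $\delta\in(0,1)$, with probability at least $1-\delta$, $$\sum_{t=1}^T\mathbb{1}[y_t'\ne y_t]\le\sum_{t=1}^T\ell_t(\mathbf{U})+KLh(\mathbf{U})^2+\frac{3K+1}{2}\ln\frac1\delta\qquad\forall\,\mathbf{U}\in\mathcal{W}.$$ Furthermore, for all $\mathbf{U}\in\mathcal{W}$ such that $\sum_{t=1}^T\ell_t(\mathbf{U})=0$, with probability at least $1-\delta$, $\sum_{t=1}^T\mathbb{1}[y_t'\ne y_t]\le 4Lh(\mathbf{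U})^2+\frac{11}{4}\ln\frac1\delta$.
   Context: Setting: for $t=1,\dots,T$ an oblivious adversary fixes $\mathbf{x}_t\in\mathbb{R}^d$, $y_t\in[K]$; the learner predicts $y_t'\in[K]$ and then observes $y_t$. Predictors $\mathbf{W}\in\mathcal{W}\subseteq\mathbb{R}^{K\times d}$ ($\mathcal{W}$ convex), rows $\mathbf{W}^k$, identified with vectors of $\mathbb{R}^{Kd}$; $\|\cdot\|$ a fixed norm on $\mathbb{R}^{Kd}$. $\ell:\mathcal{W}\times\mathbb{R}^d\times[K]\to\mathbb{R}_+$ is convex in $\mathbf{W}$ with $\frac{K-1}{K}\ell(\mathbf{W},\mathbf{x},y)+\frac1K\ell(\mathbf{W},\mathbf{x},y^\star)\ge1$ for all $\mathbf{W},\mathbf{x}$ and all $y\ne y^\star:=\arg\max_k\langle\mathbf{W}^k,\mathbf{x}\rangle$; $\ell_t$ is a regular surrogate loss with constant $L>0$ if moreover $\|\nabla\ell_t(\mathbf{W})\|^2\le2L\ell_t(\mathbf{W})$ for all $\mathbf{W}\in\mathcal{W}$. Gappletron in this setting (general version: inputs revealing set $\mathcal{Q}$, minimum dominating set $S$ of the feedback graph with $|S|=\rho$, OCO algorithm $\mathcal{A}$, $\gamma\ge0$, gap map $a$): $\mathbf{W}_1$ from $\mathcal{A}$; at round $t$: $y_t^\star=\arg\max_k\langle\mathbf{W}_t^k,\mathbf{x}_t\rangle$; $\gamma_t=0$ if $y_t^\star\in\mathcal{Q}$ (always the case here); $a_t=a(\mathbf{W}_t,\mathbf{x}_t)$;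 $\zeta_t=\mathbb{1}[\gamma_t\le a_t]$; $\mathbf{p}_t'=(1-\zeta_ta_t-(1-\zeta_t)\gamma_t)\mathbf{e}_{y_t^\star}+\zeta_ta_t\frac1K\mathbf{1}+(1-\zeta_t)\frac{\gamma_t}{\rho}\mathbf{1}_S$ (here $\mathbf{p}_t'=(1-a_t)\mathbf{e}_{y_t^\star}+a_t\frac1K\mathbf{1}$); predict $y_t'\sim\mathbf{p}_t'$; $v_t=\mathbb{1}[y_t\text{ observed}]/P_t(y_t\text{ observed})=1$; $\widehat\ell_t=v_t\ell_t$ is fed to $\mathcal{A}$, which returns $\mathbf{W}_{t+1}$. *)

theory Defs
  imports "HOL-Analysis.Analysis" "HOL-Probability.Probability"
begin

text \<open>Predictors are K x d real matrices, represented as \<open>real^'d^'k\<close>: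
  row \<open>W $ k\<close> is the row vector \<open>W^k\<close>; labels [K] are the elements of the
  finite type \<open>'k\<close>, so K = CARD('k).\<close>

definition ystar :: "real^'d^'k \<Rightarrow> real^'d \<Rightarrow> 'k" where
  "ystar W x = (SOME k. \<forall>j. (W $ j) \<bullet> x \<le> (W $ k) \<bullet> x)"

definition is_norm :: "('a::real_vector \<Rightarrow> real) \<Rightarrow> bool" where
  "is_norm N \<longleftrightarrow> (\<forall>v. 0 \<le> N v) \<and> (\<forall>v. N v = 0 \<longleftrightarrow> v = 0)
     \<and> (\<forall>c v. N (c *\<^sub>R v) = \<bar>c\<bar> * N v) \<and> (\<forall>u v. N (u + v) \<le> N u + N v)"

text \<open>Gappletron's sampling distribution in the full-information setting
  (gamma_t = 0, zeta_t = 1): p' = (1 - a) e_{y*} + a (1/K) 1, realised as the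
  mixture "with probability a draw uniformly from [K], else play y*".\<close>
definition gappletron_pmf :: "real \<Rightarrow> 'k \<Rightarrow> ('k::finite) pmf" where
  "gappletron_pmf a ys =
     bind_pmf (bernoulli_pmf a) (\<lambda>b. if b then pmf_of_set UNIV else return_pmf ys)"

end

theory Submission
  imports Defs
begin

text \<open>Because the adversary is oblivious and the labels are always revealed, the iterates
  \<open>W\<^sub>t\<close> do not depend on the learner's coins, so the mistake indicators are independent
  Bernoulli variables. By the surrogate property and \<open>a(W\<^sub>t, x\<^sub>t) = \<ell>\<^sub>t(y\<^sub>t\<^sup>\<star>)\<close>, the
  mistake probability in round \<open>t\<close> is at most \<open>(1 - 1/K) \<ell>\<^sub>t(W\<^sub>t)\<close>, and a multiplicative
  Chernoff bound with rate \<open>\<lambda>\<close> controls the number of mistakes by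
  \<open>(e\<^sup>\<lambda> - 1)/\<lambda>\<close> times their expectation plus \<open>ln(1/\<delta>)/\<lambda>\<close>. Regularity of the losses makes
  the regret guarantee self-bounding, \<open>S \<le> \<Sum>\<^sub>t \<ell>\<^sub>t(U) + h(U) \<surd>(2 L S)\<close> for
  \<open>S = \<Sum>\<^sub>t \<ell>\<^sub>t(W\<^sub>t)\<close>, and AM-GM turns this into
  \<open>(1 - 1/(2K)) S \<le> \<Sum>\<^sub>t \<ell>\<^sub>t(U) + K L h(U)\<^sup>2\<close>. The rates \<open>\<lambda> = 2/(3K+1)\<close> and, in the
  realizable case, \<open>\<lambda> = 4/11\<close> make \<open>(e\<^sup>\<lambda> - 1)/\<lambda>\<close> small enough to absorb the factors
  \<open>1 - 1/K\<close> and \<open>1 - 1/(2K)\<close>.\<close>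

lemma pmf_gappletron_pmf:
  fixes ys :: "'k::finite"
  assumes "0 \<le> a" "a \<le> 1"
  shows "pmf (gappletron_pmf a ys) b = a / CARD('k) + (1 - a) * indicator {ys} b"
  using assms unfolding gappletron_pmf_def by (simp add: pmf_bind indicator_def)

lemma gappletron_pmf_mistake_prob_le:
  fixes ys yy :: "'k::finite"
  defines "K \<equiv> real CARD('k)"
  assumes "0 \<le> a" "a \<le> 1"
    and "yy = ys \<Longrightarrow> l = a"
    and "yy \<noteq> ys \<Longrightarrow> 1 \<le> (K - 1) / K * l + 1 / K * a"
  shows "1 - pmf (gappletron_pmf a ys) yy \<le> (1 - 1 / K) * l"
proof (cases "yy = ys")
  case True
  then show ?thesis
    using assms by (simp add: pmf_gappletron_pmf algebra_simps)
next
  case False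
  have "K > 0" by (simp add: K_def)
  then have "(K - 1) / K = 1 - 1 / K" by (simp add: field_simps)
  then show ?thesis
    using False assms by (simp add: pmf_gappletron_pmf)
qed

lemma expectation_exp_indicator_neq:
  fixes q :: "'a pmf" and lam :: real
  shows "measure_pmf.expectation q (\<lambda>b. exp (lam * (if b \<noteq> c then 1 else 0)))
       = 1 + (exp lam - 1) * (1 - pmf q c)"
proof -
  have "(\<lambda>b. exp (lam * (if b \<noteq> c then 1 else 0))) = (\<lambda>b. exp lam - (exp lam - 1) * indicator {c} b)"
    by (auto simp: fun_eq_iff)
  moreover have "measure_pmf.expectation q (\<lambda>b. exp lam - (exp lam - 1) * indicator {c} b)
      = exp lam - (exp lam - 1) * pmf q c"
    by (subst Bochner_Integration.integral_diff)
      (auto simp: measure_pmf_single less_top[symmetric])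
  ultimately show ?thesis
    by (simp add: algebra_simps)
qed

lemma integrable_exp_indicator_neq:
  fixes q :: "'a pmf" and lam :: real
  shows "integrable q (\<lambda>b. exp (lam * (if b \<noteq> c then 1 else 0)))"
  by (rule measure_pmf.integrable_const_bound[where B = "exp \<bar>lam\<bar>"]) auto

lemma expectation_exp_mistakes_Pi_pmf_le:
  fixes q :: "'i \<Rightarrow> 'k pmf"
  assumes "finite I" "0 \<le> lam"
  shows "measure_pmf.expectation (Pi_pmf I dflt q)
           (\<lambda>yp. exp (lam * (\<Sum>t\<in>I. if yp t \<noteq> yy t then 1 else 0)))
         \<le> exp ((exp lam - 1) * (\<Sum>t\<in>I. 1 - pmf (q t) (yy t)))"
proof -
  have "measure_pmf.expectation (Pi_pmf I dflt q)
           (\<lambda>yp. exp (lam * (\<Sum>t\<in>I. if yp t \<noteq> yy t then 1 else 0)))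
      = measure_pmf.expectation (Pi_pmf I dflt q)
           (\<lambda>yp. \<Prod>t\<in>I. exp (lam * (if yp t \<noteq> yy t then 1 else 0)))"
    using \<open>finite I\<close> by (simp add: exp_sum sum_distrib_left)
  also have "\<dots> = (\<Prod>t\<in>I. 1 + (exp lam - 1) * (1 - pmf (q t) (yy t)))"
    using \<open>finite I\<close>
    by (subst expectation_prod_Pi_pmf) (simp_all add: expectation_exp_indicator_neq integrable_exp_indicator_neq)
  also have "\<dots> \<le> (\<Prod>t\<in>I. exp ((exp lam - 1) * (1 - pmf (q t) (yy t))))"
  proof (intro prod_mono conjI)
    fix t
    show "0 \<le> 1 + (exp lam - 1) * (1 - pmf (q t) (yy t))"
      using \<open>0 \<le> lam\<close> pmf_le_1[of "q t" "yy t"] by simp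
    show "1 + (exp lam - 1) * (1 - pmf (q t) (yy t)) \<le> exp ((exp lam - 1) * (1 - pmf (q t) (yy t)))"
      by (metis exp_ge_add_one_self)
  qed
  also have "\<dots> = exp ((exp lam - 1) * (\<Sum>t\<in>I. 1 - pmf (q t) (yy t)))"
    using \<open>finite I\<close> by (simp add: exp_sum sum_distrib_left)
  finally show ?thesis .
qed

lemma prob_le_bound_of_exp_moment:
  fixes p :: "'a pmf" and X :: "'a \<Rightarrow> real"
  assumes "0 < lam" "0 < \<delta>"
    and "integrable p (\<lambda>z. exp (lam * X z))"
    and "measure_pmf.expectation p (\<lambda>z. exp (lam * X z)) \<le> exp m"
  shows "1 - \<delta> \<le> measure_pmf.prob p {z. X z \<le> (m + ln (1 / \<delta>)) / lam}"
proof -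
  define c where "c = (m + ln (1 / \<delta>)) / lam"
  have "measure_pmf.prob p {z. \<not> X z \<le> c} \<le> measure_pmf.prob p {z \<in> space p. exp (lam * c) \<le> exp (lam * X z)}"
    using \<open>0 < lam\<close> by (intro measure_pmf.finite_measure_mono) auto
  also have "\<dots> \<le> measure_pmf.expectation p (\<lambda>z. exp (lam * X z)) / exp (lam * c)"
    by (rule integral_Markov_inequality_measure[OF assms(3)]) auto
  also have "\<dots> \<le> exp m / exp (lam * c)"
    using assms(4) by (simp add: divide_right_mono)
  also have "\<dots> = \<delta>"
    using assms by (simp add: c_def exp_diff[symmetric] ln_div)
  finally have "measure_pmf.prob p {z. \<not> X z \<le> c} \<le> \<delta>" .
  moreover have "measure_pmf.prob p {z. \<not> X z \<le> c} = 1 - measure_pmf.prob p {z. X z \<le> c}"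
    using measure_pmf.prob_compl[of "{z. X z \<le> c}" p]
    by (simp add: Compl_eq_Diff_UNIV[symmetric] Collect_neg_eq)
  ultimately show ?thesis by (simp add: c_def)
qed

lemma Pi_pmf_mistakes_chernoff:
  fixes q :: "'i \<Rightarrow> 'k pmf" and lam :: real
  assumes "finite I" "0 < lam" "0 < \<delta>"
  shows "1 - \<delta> \<le> measure_pmf.prob (Pi_pmf I dflt q)
           {yp. (\<Sum>t\<in>I. if yp t \<noteq> yy t then 1 else 0)
              \<le> ((exp lam - 1) * (\<Sum>t\<in>I. 1 - pmf (q t) (yy t)) + ln (1 / \<delta>)) / lam}"
proof (rule prob_le_bound_of_exp_moment[OF \<open>0 < lam\<close> \<open>0 < \<delta>\<close>])
  have "(\<Sum>t\<in>I. if yp t \<noteq> yy t then 1 else 0) \<le> real (card I)" for yp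
    using sum_bounded_above[of I "\<lambda>t. if yp t \<noteq> yy t then 1 else 0 :: real" 1] by auto
  then show "integrable (Pi_pmf I dflt q) (\<lambda>yp. exp (lam * (\<Sum>t\<in>I. if yp t \<noteq> yy t then 1 else 0)))"
    using \<open>0 < lam\<close>
    by (intro measure_pmf.integrable_const_bound[where B = "exp (lam * card I)"]) auto
  show "measure_pmf.expectation (Pi_pmf I dflt q) (\<lambda>yp. exp (lam * (\<Sum>t\<in>I. if yp t \<noteq> yy t then 1 else 0)))
      \<le> exp ((exp lam - 1) * (\<Sum>t\<in>I. 1 - pmf (q t) (yy t)))"
    using assms by (intro expectation_exp_mistakes_Pi_pmf_le) auto
qed

lemma exp_le_one_div_one_minus:
  fixes x :: real
  assumes "x < 1"
  shows "exp x \<le> 1 / (1 - x)"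
proof -
  have "(1 - x) * exp x \<le> exp (- x) * exp x"
    using exp_ge_add_one_self[of "- x"] by (intro mult_right_mono) auto
  then show ?thesis
    using assms by (simp add: exp_minus field_simps)
qed

lemma exp_minus_one_div_le:
  fixes l :: real
  assumes "0 < l" "l < 2"
  shows "(exp l - 1) / l \<le> (4 - l) / (2 - l)\<^sup>2"
proof -
  have "exp l = exp (l / 2) ^ 2"
    by (simp add: exp_add[symmetric] power2_eq_square)
  also have "\<dots> \<le> (1 / (1 - l / 2)) ^ 2"
    using assms exp_le_one_div_one_minus[of "l / 2"] by (intro power_mono) auto
  also have "\<dots> = 4 / (2 - l)\<^sup>2"
    using assms by (simp add: field_simps)
  finally have "exp l - 1 \<le> 4 / (2 - l)\<^sup>2 - 1" by simp
  also have "\<dots> = l * ((4 - l) / (2 - l)\<^sup>2)"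
    using assms by (simp add: field_simps) (simp add: power2_eq_square algebra_simps)
  finally show ?thesis
    using assms by (simp add: pos_divide_le_eq mult.commute)
qed

lemma exp_rate_general_bound:
  fixes K :: real
  assumes "1 \<le> K"
  shows "(exp (2 / (3 * K + 1)) - 1) / (2 / (3 * K + 1)) * (1 - 1 / K) \<le> 1 - 1 / (2 * K)"
proof -
  define l where "l = 2 / (3 * K + 1)"
  have l: "0 < l" "l < 2"
    using assms by (auto simp: l_def field_simps)
  have "4 - l = 2 * (6 * K + 1) / (3 * K + 1)" "2 - l = 6 * K / (3 * K + 1)"
    using assms by (simp_all add: l_def field_simps)
  then have "(4 - l) / (2 - l)\<^sup>2 = 2 * (6 * K + 1) / (3 * K + 1) / (6 * K / (3 * K + 1))\<^sup>2"
    by simp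
  also have "\<dots> = (6 * K + 1) * (3 * K + 1) / (18 * K\<^sup>2)"
    using assms by (simp add: divide_simps add_pos_pos) (simp add: power2_eq_square algebra_simps)
  finally have pade: "(4 - l) / (2 - l)\<^sup>2 = (6 * K + 1) * (3 * K + 1) / (18 * K\<^sup>2)" .
  have "(exp l - 1) / l * (1 - 1 / K) \<le> (6 * K + 1) * (3 * K + 1) / (18 * K\<^sup>2) * (1 - 1 / K)"
    using assms pade exp_minus_one_div_le[OF l] by (intro mult_right_mono) auto
  also have "\<dots> \<le> 1 - 1 / (2 * K)"
    using assms by (simp add: field_simps power2_eq_square)
  finally show ?thesis
    by (simp add: l_def)
qed

lemma exp_rate_realizable_bound: "(exp (4 / 11 :: real) - 1) / (4 / 11) \<le> 2"
  using exp_minus_one_div_le[of "4 / 11"] by (simp add: power2_eq_square)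

lemma regret_self_bounding:
  fixes f g G :: "'i \<Rightarrow> real" and H L :: real
  assumes regret: "(\<Sum>t\<in>I. f t - g t) \<le> H * sqrt (\<Sum>t\<in>I. (G t)\<^sup>2)"
    and regular: "\<And>t. t \<in> I \<Longrightarrow> (G t)\<^sup>2 \<le> 2 * L * f t"
    and "0 \<le> H"
  shows "(\<Sum>t\<in>I. f t) \<le> (\<Sum>t\<in>I. g t) + H * sqrt (2 * L * (\<Sum>t\<in>I. f t))"
proof -
  have "(\<Sum>t\<in>I. f t) - (\<Sum>t\<in>I. g t) \<le> H * sqrt (\<Sum>t\<in>I. (G t)\<^sup>2)"
    using regret by (simp add: sum_subtractf)
  also have "\<dots> \<le> H * sqrt (2 * L * (\<Sum>t\<in>I. f t))"
    using regular \<open>0 \<le> H\<close> by (intro mult_left_mono real_sqrt_le_mono) (auto simp: sum_distrib_left intro: sum_mono)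
  finally show ?thesis by simp
qed

lemma self_bounding_le:
  fixes c L S B H :: real
  assumes "0 < c" "0 \<le> L" "0 \<le> S" and self_bound: "S \<le> B + H * sqrt (2 * L * S)"
  shows "(1 - 1 / (2 * c)) * S \<le> B + c * L * H\<^sup>2"
proof -
  have "0 \<le> (sqrt S - c * H * sqrt (2 * L))\<^sup>2" by simp
  also have "\<dots> = S - 2 * c * H * sqrt (2 * L * S) + 2 * c\<^sup>2 * L * H\<^sup>2"
    using assms by (simp add: power2_diff real_sqrt_mult field_simps)
  finally have "H * sqrt (2 * L * S) \<le> S / (2 * c) + c * L * H\<^sup>2"
    using assms by (simp add: field_simps power2_eq_square)
  then show ?thesis
    using self_bound by (simp add: left_diff_distrib)
qed

lemma prob_mistakes_le_self_bounding:
  fixes q :: "'i \<Rightarrow> 'k pmf" and K L S \<delta> :: real and B H :: "'w \<Rightarrow> real"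
  assumes "finite I" "0 < \<delta>" "1 \<le> K" "0 \<le> L" "0 \<le> S"
    and expected: "(\<Sum>t\<in>I. 1 - pmf (q t) (yy t)) \<le> (1 - 1 / K) * S"
    and self_bound: "\<And>U. U \<in> \<W> \<Longrightarrow> S \<le> B U + H U * sqrt (2 * L * S)"
  shows "1 - \<delta> \<le> measure_pmf.prob (Pi_pmf I dflt q)
           {yp. \<forall>U\<in>\<W>. (\<Sum>t\<in>I. if yp t \<noteq> yy t then 1 else 0)
              \<le> B U + K * L * (H U)\<^sup>2 + (3 * K + 1) / 2 * ln (1 / \<delta>)}"
proof -
  define lam where "lam = 2 / (3 * K + 1)"
  have "0 < lam"
    using \<open>1 \<le> K\<close> by (simp add: lam_def add_pos_pos)
  have expected_le: "(exp lam - 1) / lam * (\<Sum>t\<in>I. 1 - pmf (q t) (yy t)) \<le> B U + K * L * (H U)\<^sup>2"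
    if "U \<in> \<W>" for U
  proof -
    have "(exp lam - 1) / lam * (\<Sum>t\<in>I. 1 - pmf (q t) (yy t)) \<le> (exp lam - 1) / lam * ((1 - 1 / K) * S)"
      using expected \<open>0 < lam\<close> by (intro mult_left_mono) auto
    also have "\<dots> \<le> (1 - 1 / (2 * K)) * S"
      unfolding mult.assoc[symmetric] using exp_rate_general_bound[OF \<open>1 \<le> K\<close>] \<open>0 \<le> S\<close>
      by (intro mult_right_mono) (simp_all add: lam_def)
    also have "\<dots> \<le> B U + K * L * (H U)\<^sup>2"
      using \<open>1 \<le> K\<close> assms(4,5) self_bound[OF that] by (intro self_bounding_le) auto
    finally show ?thesis .
  qed
  have "ln (1 / \<delta>) / lam = (3 * K + 1) / 2 * ln (1 / \<delta>)"
    by (simp add: lam_def)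
  then have threshold_le: "((exp lam - 1) * (\<Sum>t\<in>I. 1 - pmf (q t) (yy t)) + ln (1 / \<delta>)) / lam
      \<le> B U + K * L * (H U)\<^sup>2 + (3 * K + 1) / 2 * ln (1 / \<delta>)" if "U \<in> \<W>" for U
    using expected_le[OF that] by (simp only: add_divide_distrib times_divide_eq_left[symmetric])
  have incl: "{yp. (\<Sum>t\<in>I. if yp t \<noteq> yy t then 1 else 0)
              \<le> ((exp lam - 1) * (\<Sum>t\<in>I. 1 - pmf (q t) (yy t)) + ln (1 / \<delta>)) / lam}
      \<subseteq> {yp. \<forall>U\<in>\<W>. (\<Sum>t\<in>I. if yp t \<noteq> yy t then 1 else 0)
              \<le> B U + K * L * (H U)\<^sup>2 + (3 * K + 1) / 2 * ln (1 / \<delta>)}"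
    (is "?good \<subseteq> ?target")
    using threshold_le by (auto intro: order_trans)
  have "1 - \<delta> \<le> measure_pmf.prob (Pi_pmf I dflt q) ?good"
    by (rule Pi_pmf_mistakes_chernoff[OF \<open>finite I\<close> \<open>0 < lam\<close> \<open>0 < \<delta>\<close>])
  also have "\<dots> \<le> measure_pmf.prob (Pi_pmf I dflt q) ?target"
    using incl by (intro measure_pmf.finite_measure_mono) simp_all
  finally show ?thesis .
qed

lemma prob_mistakes_le_realizable:
  fixes q :: "'i \<Rightarrow> 'k pmf" and L S H \<delta> :: real
  assumes "finite I" "0 < \<delta>" "0 \<le> L" "0 \<le> S"
    and expected: "(\<Sum>t\<in>I. 1 - pmf (q t) (yy t)) \<le> S"
    and "S \<le> H * sqrt (2 * L * S)"
  shows "1 - \<delta> \<le> measure_pmf.prob (Pi_pmf I dflt q)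
           {yp. (\<Sum>t\<in>I. if yp t \<noteq> yy t then 1 else 0) \<le> 4 * L * H\<^sup>2 + 11 / 4 * ln (1 / \<delta>)}"
proof -
  define lam :: real where "lam = 4 / 11"
  have "0 < lam" by (simp add: lam_def)
  have "0 \<le> (\<Sum>t\<in>I. 1 - pmf (q t) (yy t))"
    by (simp add: sum_nonneg pmf_le_1)
  then have "(exp lam - 1) / lam * (\<Sum>t\<in>I. 1 - pmf (q t) (yy t)) \<le> 2 * S"
    using exp_rate_realizable_bound expected by (intro mult_mono) (simp_all add: lam_def)
  also have "\<dots> \<le> 4 * L * H\<^sup>2"
    using self_bounding_le[of 1 L S 0 H] assms by simp
  finally have expected_le: "(exp lam - 1) / lam * (\<Sum>t\<in>I. 1 - pmf (q t) (yy t)) \<le> 4 * L * H\<^sup>2" .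
  moreover have "ln (1 / \<delta>) / lam = 11 / 4 * ln (1 / \<delta>)"
    by (simp add: lam_def)
  ultimately have threshold_le: "((exp lam - 1) * (\<Sum>t\<in>I. 1 - pmf (q t) (yy t)) + ln (1 / \<delta>)) / lam
      \<le> 4 * L * H\<^sup>2 + 11 / 4 * ln (1 / \<delta>)"
    by (simp only: add_divide_distrib times_divide_eq_left[symmetric])
  then have incl: "{yp. (\<Sum>t\<in>I. if yp t \<noteq> yy t then 1 else 0)
              \<le> ((exp lam - 1) * (\<Sum>t\<in>I. 1 - pmf (q t) (yy t)) + ln (1 / \<delta>)) / lam}
      \<subseteq> {yp. (\<Sum>t\<in>I. if yp t \<noteq> yy t then 1 else 0) \<le> 4 * L * H\<^sup>2 + 11 / 4 * ln (1 / \<delta>)}"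
    (is "?good \<subseteq> ?target")
    by (auto intro: order_trans)
  have "1 - \<delta> \<le> measure_pmf.prob (Pi_pmf I dflt q) ?good"
    by (rule Pi_pmf_mistakes_chernoff[OF \<open>finite I\<close> \<open>0 < lam\<close> \<open>0 < \<delta>\<close>])
  also have "\<dots> \<le> measure_pmf.prob (Pi_pmf I dflt q) ?target"
    using incl by (intro measure_pmf.finite_measure_mono) simp_all
  finally show ?thesis .
qed

theorem theorem3:
  fixes \<W> :: "(real^'d::finite^'k::finite) set"
    and nrm :: "real^'d^'k \<Rightarrow> real"
    and loss :: "real^'d^'k \<Rightarrow> real^'d \<Rightarrow> 'k \<Rightarrow> real"
    and grad :: "nat \<Rightarrow> real^'d^'k \<Rightarrow> real^'d^'k"
    and x :: "nat \<Rightarrow> real^'d" and y :: "nat \<Rightarrow> 'k"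
    and A :: "(real^'d^'k \<Rightarrow> real) list \<Rightarrow> real^'d^'k"
    and h :: "real^'d^'k \<Rightarrow> real"
    and a :: "real^'d^'k \<Rightarrow> real^'d \<Rightarrow> real"
    and L \<delta> :: real and T :: nat
  defines "K \<equiv> real CARD('k)"
    and "Wt \<equiv> (\<lambda>t. A (map (\<lambda>s V. loss V (x s) (y s)) [1..<t]))"
  assumes W_convex: "convex \<W>"
    and nrm: "is_norm nrm"
    and loss_nonneg: "\<And>W xx yy. W \<in> \<W> \<Longrightarrow> 0 \<le> loss W xx yy"
    and loss_convex: "\<And>xx yy. convex_on \<W> (\<lambda>W. loss W xx yy)"
    and loss_surrogate: "\<And>W xx yy. W \<in> \<W> \<Longrightarrow> yy \<noteq> ystar W xx \<Longrightarrow>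
           (K - 1) / K * loss W xx yy + 1 / K * loss W xx (ystar W xx) \<ge> 1"
    and grad: "\<And>t W. t \<in> {1..T} \<Longrightarrow> W \<in> \<W> \<Longrightarrow>
           ((\<lambda>V. loss V (x t) (y t)) has_derivative (\<lambda>H. grad t W \<bullet> H)) (at W within \<W>)"
    and L_pos: "L > 0"
    and regular: "\<And>t W. t \<in> {1..T} \<Longrightarrow> W \<in> \<W> \<Longrightarrow>
           (nrm (grad t W))\<^sup>2 \<le> 2 * L * loss W (x t) (y t)"
    and A_range: "\<And>t. t \<in> {1..T} \<Longrightarrow> Wt t \<in> \<W>"
    and h_nonneg: "\<And>U. U \<in> \<W> \<Longrightarrow> 0 \<le> h U"
    and regret: "\<And>U. U \<in> \<W> \<Longrightarrow>
           (\<Sum>t=1..T. loss (Wt t) (x t) (y t) - loss U (x t) (y t))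
             \<le> h U * sqrt (\<Sum>t=1..T. (nrm (grad t (Wt t)))\<^sup>2)"
    and a_range: "\<And>W xx. a W xx \<in> {0..1}"
    and a_gap: "\<And>t. t \<in> {1..T} \<Longrightarrow>
           a (Wt t) (x t) = loss (Wt t) (x t) (ystar (Wt t) (x t))"
    and delta: "0 < \<delta>" "\<delta> < 1"
  defines "P \<equiv> Pi_pmf {1..T} undefined
              (\<lambda>t. gappletron_pmf (a (Wt t) (x t)) (ystar (Wt t) (x t)))"
  shows "measure_pmf.prob P
           {yp. \<forall>U\<in>\<W>. (\<Sum>t=1..T. if yp t \<noteq> y t then 1 else 0 :: real)
               \<le> (\<Sum>t=1..T. loss U (x t) (y t)) + K * L * (h U)\<^sup>2
                  + (3 * K + 1) / 2 * ln (1 / \<delta>)} \<ge> 1 - \<delta>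
         \<and> (\<forall>U\<in>\<W>. (\<Sum>t=1..T. loss U (x t) (y t)) = 0 \<longrightarrow>
           measure_pmf.prob P
             {yp. (\<Sum>t=1..T. if yp t \<noteq> y t then 1 else 0 :: real)
                 \<le> 4 * L * (h U)\<^sup>2 + 11 / 4 * ln (1 / \<delta>)} \<ge> 1 - \<delta>)"
proof -
  \<comment> \<open>Convexity, the norm axioms and differentiability enter only through the assumed
    regret guarantee \<open>regret\<close>.\<close>
  define q where "q = (\<lambda>t. gappletron_pmf (a (Wt t) (x t)) (ystar (Wt t) (x t)))"
  define S where "S = (\<Sum>t=1..T. loss (Wt t) (x t) (y t))"
  have "1 \<le> K"
    by (simp add: K_def Suc_le_eq)
  have "0 \<le> S"
    unfolding S_def by (intro sum_nonneg loss_nonneg A_range) auto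
  have "1 - pmf (q t) (y t) \<le> (1 - 1 / K) * loss (Wt t) (x t) (y t)" if "t \<in> {1..T}" for t
    unfolding q_def K_def
    using a_range[of "Wt t" "x t"] a_gap[OF that, symmetric] loss_surrogate[OF A_range[OF that], of "y t" "x t"]
    by (intro gappletron_pmf_mistake_prob_le) (auto simp: K_def)
  then have expected: "(\<Sum>t=1..T. 1 - pmf (q t) (y t)) \<le> (1 - 1 / K) * S"
    unfolding S_def sum_distrib_left by (intro sum_mono) auto
  have self_bound: "S \<le> (\<Sum>t=1..T. loss U (x t) (y t)) + h U * sqrt (2 * L * S)" if "U \<in> \<W>" for U
    unfolding S_def using regret[OF that] regular A_range h_nonneg[OF that]
    by (intro regret_self_bounding) auto
  have expected': "(\<Sum>t=1..T. 1 - pmf (q t) (y t)) \<le> S"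
    using expected by (rule order_trans) (use \<open>0 \<le> S\<close> \<open>1 \<le> K\<close> in \<open>auto intro: mult_left_le_one_le\<close>)
  have "S \<le> h U * sqrt (2 * L * S)" if "U \<in> \<W>" "(\<Sum>t=1..T. loss U (x t) (y t)) = 0" for U
    using self_bound[OF that(1)] that(2) by simp
  moreover have "P = Pi_pmf {1..T} undefined q"
    by (simp add: P_def q_def)
  ultimately show ?thesis
    using prob_mistakes_le_self_bounding[where \<W> = \<W> and B = "\<lambda>U. \<Sum>t=1..T. loss U (x t) (y t)" and H = h,
        OF finite_atLeastAtMost delta(1) \<open>1 \<le> K\<close> less_imp_le[OF L_pos] \<open>0 \<le> S\<close> expected self_bound]
      prob_mistakes_le_realizable[OF finite_atLeastAtMost delta(1) less_imp_le[OF L_pos] \<open>0 \<le> S\<close> expected']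
    by auto
qed

end
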